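(* The randomized mechanism that always outputs the uniform distribution over $[0,1]$ is an $\mathcal O(\sqrt n)$-approximation for the minimum utility: there is an absolute constant $C$ such that for every $n\ge 2$ and every profile $\mathbf x\in[0,1]^n$, $$\max_{z\in[0,1]}\min_i|x_i-z|\le C\sqrt n\;\mathbb E_{y\sim U[0,1]}\Big[\min_i |x_i-y|\Big].$$
   Context: Agents $i=1,\dots,n$ at locations $x_i\in[0,1]$ receive utility $|x_i-y|$ from an obnoxious facility at $y\in[0,1]$. The minimum-utility objective (the $L_{-\infty}$ social utility) of $y$ is $\min_i|x_i-y|$; a randomized mechanism's value is the expectation of this objective over its output distribution. *)

theory Defs
  imports "HOL-Probability.Probability"
begin

definition min_util :: "nat \<Rightarrow> (nat \<Rightarrow> real) \<Rightarrow> real \<Rightarrow> real" where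
  "min_util n x y = Min ((\<lambda>i. \<bar>x i - y\<bar>) ` {..<n})"

end

theory Submission
  imports Defs
begin

text \<open>Write E for the expected objective under the uniform distribution and M for
  the objective at some z in [0,1]. The objective is 1-Lipschitz, so it is at least M/2 on an
  interval of length M/2 next to z, whence E \<ge> M^2/4. On the other hand, the
  points within distance t = 1/(4n) from some agent cover measure at most 2nt = 1/2,
  so E \<ge> t/2 = 1/(8n). Multiplying, M^2 \<le> 4E \<cdot> 8nE, i.e. M \<le> sqrt(32n) E.\<close>

lemma min_util_ge_iff:
  assumes "n > 0"
  shows "c \<le> min_util n x y \<longleftrightarrow> (\<forall>i<n. c \<le> \<bar>x i - y\<bar>)"
  using assms unfolding min_util_def by (subst Min_ge_iff) auto

lemma min_util_le: "i < n \<Longrightarrow> min_util n x y \<le> \<bar>x i - y\<bar>"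
  unfolding min_util_def by (rule Min_le) auto

lemma min_util_nonneg: "n > 0 \<Longrightarrow> 0 \<le> min_util n x y"
  by (simp add: min_util_ge_iff)

lemma borel_measurable_min_util: "min_util n x \<in> borel_measurable borel"
  unfolding min_util_def by measurable

lemma min_util_le_add_abs:
  assumes "n > 0"
  shows "min_util n x y \<le> min_util n x y' + \<bar>y - y'\<bar>"
proof -
  have "min_util n x y' \<in> (\<lambda>i. \<bar>x i - y'\<bar>) ` {..<n}"
    unfolding min_util_def using assms by (intro Min_in) auto
  then obtain j where "j < n" and j: "min_util n x y' = \<bar>x j - y'\<bar>" by auto
  from \<open>j < n\<close> have "min_util n x y \<le> \<bar>x j - y\<bar>" by (rule min_util_le)
  also have "\<dots> \<le> min_util n x y' + \<bar>y - y'\<bar>" unfolding j by linarith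
  finally show ?thesis .
qed

lemma lipschitz_min_util:
  assumes "n > 0"
  shows "1-lipschitz_on A (min_util n x)"
proof (rule lipschitz_onI)
  show "dist (min_util n x y) (min_util n x y') \<le> 1 * dist y y'" for y y'
    using min_util_le_add_abs[OF assms, of x y y'] min_util_le_add_abs[OF assms, of x y' y]
    by (simp add: dist_real_def abs_le_iff abs_minus_commute)
qed simp

lemma integral_uniform_measure:
  fixes f :: "'a \<Rightarrow> real"
  assumes "f \<in> borel_measurable M" "A \<in> sets M" "emeasure M A \<noteq> 0" "emeasure M A \<noteq> \<infinity>"
  shows "(\<integral>y. f y \<partial>uniform_measure M A) = (LINT y:A|M. f y) / measure M A"
proof -
  have "measure M A > 0"
    using assms by (simp add: emeasure_eq_ennreal_measure zero_less_measure_iff)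
  then have "uniform_measure M A = density M (\<lambda>y. indicator A y / measure M A)"
    unfolding uniform_measure_def using assms
    by (intro density_cong)
      (auto simp: emeasure_eq_ennreal_measure divide_ennreal[of 1, symmetric] split: split_indicator)
  then show ?thesis
    using assms by (simp add: integral_density set_lebesgue_integral_def)
qed

lemma set_integrable_min_util: "n > 0 \<Longrightarrow> set_integrable lborel {a..b} (min_util n x)"
  by (intro borel_integrable_atLeastAtMost' lipschitz_on_continuous_on[OF lipschitz_min_util])

lemma interval_mult_le_set_integral:
  fixes f :: "real \<Rightarrow> real"
  assumes f: "set_integrable lborel S f" and "{a..b} \<subseteq> S" "a \<le> b"
    and "\<And>y. y \<in> S \<Longrightarrow> 0 \<le> f y" "\<And>y. y \<in> {a..b} \<Longrightarrow> c \<le> f y"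
  shows "c * (b - a) \<le> (LINT y:S|lborel. f y)"
proof -
  have "c * (b - a) = (\<integral>y. c * indicator {a..b} y \<partial>lborel)"
    using \<open>a \<le> b\<close> by simp
  also have "\<dots> \<le> (\<integral>y. indicator S y *\<^sub>R f y \<partial>lborel)"
    using f assms(2-5) unfolding set_integrable_def
    by (intro integral_mono) (auto split: split_indicator)
  finally show ?thesis
    unfolding set_lebesgue_integral_def .
qed

lemma min_util_sq_le_set_integral:
  assumes "n > 0" "\<forall>i<n. x i \<in> {0..1}" "z \<in> {0..1}"
  shows "(min_util n x z)\<^sup>2 / 4 \<le> (LINT y:{0..1}|lborel. min_util n x y)"
proof -
  define M where "M = min_util n x z"
  have M: "0 \<le> M" "M \<le> \<bar>x 0 - z\<bar>" "x 0 \<in> {0..1}"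
    unfolding M_def using assms by (auto intro: min_util_nonneg min_util_le)
  \<comment> \<open>The interval fits into [0,1] on the side of z away from the agent x 0.\<close>
  obtain a where J: "{a..a + M/2} \<subseteq> {0..1}" and "a \<le> z" "z \<le> a + M/2"
  proof (cases "z \<le> x 0")
    case True
    then show ?thesis using that[of z] M assms(3) by auto
  next
    case False
    then show ?thesis using that[of "z - M/2"] M assms(3) by auto
  qed
  have "M/2 \<le> min_util n x y" if "y \<in> {a..a + M/2}" for y
  proof -
    have "M \<le> min_util n x y + \<bar>z - y\<bar>"
      unfolding M_def using \<open>n > 0\<close> by (rule min_util_le_add_abs)
    moreover have "\<bar>z - y\<bar> \<le> M/2"
      using that \<open>a \<le> z\<close> \<open>z \<le> a + M/2\<close> by (auto split: abs_split)
    ultimately show ?thesis by simp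
  qed
  then have "M/2 * (a + M/2 - a) \<le> (LINT y:{0..1}|lborel. min_util n x y)"
    using J M set_integrable_min_util min_util_nonneg \<open>n > 0\<close>
    by (intro interval_mult_le_set_integral) auto
  then show ?thesis
    unfolding M_def[symmetric] by (simp add: power2_eq_square)
qed

lemma min_util_set_integral_ge:
  assumes "n > 0" "t > 0"
  shows "t * (1 - 2 * real n * t) \<le> (LINT y:{0..1}|lborel. min_util n x y)"
proof -
  define g where
    "g y = t * indicator {0..1} y - (\<Sum>i<n. t * indicator {x i - t..x i + t} y)" for y :: real
  have int_ind: "integrable lborel (\<lambda>y::real. t * indicator {a..b} y :: real)" for a b
    by (intro Bochner_Integration.integrable_mult_right integrable_real_indicator)
      (auto simp: emeasure_lborel_Icc_eq)
  have "t * (1 - 2 * real n * t) = (\<integral>y. t * indicator {0..1::real} y \<partial>lborel)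
      - (\<Sum>i<n. \<integral>y. t * indicator {x i - t..x i + t} y \<partial>lborel)"
    using \<open>t > 0\<close> by (simp add: algebra_simps)
  also have "\<dots> = (\<integral>y. g y \<partial>lborel)"
    unfolding g_def
    by (simp only: Bochner_Integration.integral_sum[OF int_ind]
        Bochner_Integration.integral_diff[OF int_ind Bochner_Integration.integrable_sum[OF int_ind]])
  also have "\<dots> \<le> (\<integral>y. indicator {0..1} y *\<^sub>R min_util n x y \<partial>lborel)"
  proof (rule integral_mono)
    show "integrable lborel g"
      unfolding g_def
      by (intro Bochner_Integration.integrable_diff Bochner_Integration.integrable_sum int_ind)
    show "integrable lborel (\<lambda>y. indicator {0..1} y *\<^sub>R min_util n x y)"
      using set_integrable_min_util[OF \<open>n > 0\<close>] by (simp add: set_integrable_def)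
    show "g y \<le> indicator {0..1} y *\<^sub>R min_util n x y" for y
    proof (cases "\<exists>i<n. y \<in> {x i - t..x i + t}")
      case True
      then obtain i where "i < n" "y \<in> {x i - t..x i + t}" by blast
      then have "t \<le> (\<Sum>i<n. t * indicator {x i - t..x i + t} y)"
        using \<open>t > 0\<close> member_le_sum[of i "{..<n}" "\<lambda>i. t * indicator {x i - t..x i + t} y"]
        by auto
      moreover have "t * indicator {0..1} y \<le> t"
        using \<open>t > 0\<close> by (simp split: split_indicator)
      ultimately have "g y \<le> 0"
        unfolding g_def by linarith
      then show ?thesis
        using min_util_nonneg[OF \<open>n > 0\<close>, of x y] by (simp split: split_indicator)
    next
      case False
      then have "g y = t * indicator {0..1} y"
        unfolding g_def by (simp add: sum.neutral)
      moreover have "t \<le> min_util n x y"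
        using False \<open>n > 0\<close> by (force simp: min_util_ge_iff split: abs_split)
      ultimately show ?thesis
        by (simp split: split_indicator)
    qed
  qed
  finally show ?thesis
    unfolding set_lebesgue_integral_def .
qed

lemma min_util_le_sqrt_set_integral:
  assumes "n > 0" "\<forall>i<n. x i \<in> {0..1}" "z \<in> {0..1}"
  shows "min_util n x z \<le> sqrt 32 * sqrt n * (LINT y:{0..1}|lborel. min_util n x y)"
proof -
  define E where "E = (LINT y:{0..1}|lborel. min_util n x y)"
  have E_lower: "1 \<le> 8 * real n * E"
    using min_util_set_integral_ge[OF \<open>n > 0\<close>, of "1 / (4 * real n)" x] \<open>n > 0\<close>
    unfolding E_def by (simp add: field_simps)
  then have "0 \<le> E"
    by (smt (verit) mult_nonneg_nonpos of_nat_0_le_iff)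
  have "(min_util n x z)\<^sup>2 \<le> 4 * E * 1"
    using min_util_sq_le_set_integral[OF assms] unfolding E_def by linarith
  also have "\<dots> \<le> 4 * E * (8 * n * E)"
    using E_lower \<open>0 \<le> E\<close> by (intro mult_left_mono) auto
  also have "\<dots> = 32 * real n * E\<^sup>2"
    by (simp add: power2_eq_square)
  also have "\<dots> = (sqrt 32 * sqrt n * E)\<^sup>2"
    by (simp add: power_mult_distrib)
  finally show ?thesis
    unfolding E_def[symmetric] by (rule power2_le_imp_le) (use \<open>0 \<le> E\<close> in simp)
qed

theorem theorem5:
  shows "\<exists>C::real. \<forall>n::nat. \<forall>x::nat \<Rightarrow> real.
           n \<ge> 2 \<longrightarrow> (\<forall>i<n. x i \<in> {0..1}) \<longrightarrow>
           (SUP z\<in>{0..1::real}. min_util n x z)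
             \<le> C * sqrt (real n) *
               (\<integral>y. min_util n x y \<partial>(uniform_measure lborel {0..1::real}))"
proof (intro exI allI impI)
  fix n :: nat and x :: "nat \<Rightarrow> real"
  assume "n \<ge> 2" and x: "\<forall>i<n. x i \<in> {0..1}"
  then have "n > 0" by simp
  have "(\<integral>y. min_util n x y \<partial>uniform_measure lborel {0..1::real})
      = (LINT y:{0..1}|lborel. min_util n x y)"
    by (subst integral_uniform_measure) (auto intro: borel_measurable_min_util)
  moreover have "(SUP z\<in>{0..1}. min_util n x z)
      \<le> sqrt 32 * sqrt n * (LINT y:{0..1}|lborel. min_util n x y)"
    using min_util_le_sqrt_set_integral[OF \<open>n > 0\<close> x] by (intro cSUP_least) auto
  ultimately show "(SUP z\<in>{0..1}. min_util n x z)
      \<le> sqrt 32 * sqrt n * (\<integral>y. min_util n x y \<partial>uniform_measure lborel {0..1})"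
    by simp
qed

end
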